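(* Let $B=\{b_1,\ldots,b_n\}\subset\mathbb{R}$ consist of distinct real numbers, with $b_1$ the smallest element of $B$. Suppose that $u_1$ is a trigonometric polynomial which is not identically zero, and that $u_2,\ldots,u_n$ are bounded measurable functions on $\mathbb{R}$. If $f:\mathbb{R}\to\mathbb{C}$ is a measurable function which is not zero almost everywhere and \[ \sum_{j=1}^n u_j(x)f(x+b_j)=0\qquad\text{for a.e. } x\in\mathbb{R}, \] then there exists a constant $c>0$ such that $\limsup_{x\to\infty}|f(x)|e^{cx^2}>0$. In particular, if $f$ is not zero almost everywhere and $\lim_{x\to\infty}|f(x)|e^{cx^2}=0$ for all $c>0$, then $\mathcal G(f,\mathbb{R}^2)$ is linearly independent.
   Context: A trigonometric polynomial is a function $u(x)=\sum_{j=1}^m c_je^{2\pi i a_j x}$ with $a_j\in\mathbb{R}$, $c_j\in\mathbb{C}$ (not necessarily periodic). For $a,b\in\mathbb{R}$, $M_aT_bf(x)=e^{2\pi i a x}f(x-b)$, and $\mathcal G(f,\mathbb{R}^2)=\{M_aT_bf:a,b\in\mathbb{R}\}$. Measurable functions equal almost everywhere are identified; $\mathcal G(f,\mathbb{R}^2)$ is linearly independent if every finite linear combination $\sum c_{(a,b)}M_aT_bf$ over distinct pairs $(a,b)$ with coefficients not all zero is not zero almost everywhere. *)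

theory Defs
  imports "HOL-Analysis.Analysis"
begin

definition trig_poly :: "(real \<Rightarrow> complex) \<Rightarrow> bool" where
  "trig_poly u \<longleftrightarrow> (\<exists>(m::nat) (a::nat \<Rightarrow> real) (c::nat \<Rightarrow> complex).
      u = (\<lambda>x. \<Sum>j<m. c j * exp (2 * of_real pi * \<i> * of_real (a j * x))))"

definition MT :: "real \<Rightarrow> real \<Rightarrow> (real \<Rightarrow> complex) \<Rightarrow> real \<Rightarrow> complex" where
  "MT a b f x = exp (2 * of_real pi * \<i> * of_real (a * x)) * f (x - b)"

definition gabor_lin_indep :: "(real \<Rightarrow> complex) \<Rightarrow> bool" where
  "gabor_lin_indep f \<longleftrightarrow>
     (\<forall>(S::(real \<times> real) set) (c::real \<times> real \<Rightarrow> complex).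
        finite S \<longrightarrow> (\<exists>p\<in>S. c p \<noteq> 0) \<longrightarrow>
        \<not> (AE x in lborel. (\<Sum>p\<in>S. c p * MT (fst p) (snd p) f x) = 0))"

end

theory Submission
  imports Defs
begin

text \<open>Write \<open>u\<^sub>1\<close> as an exponential sum. A Remez-type estimate, proved by induction on the
  number of frequencies with the mean value theorem, shows that \<open>\<bar>u\<^sub>1\<bar> < \<epsilon>\<close> only on a set of
  measure \<open>O(\<epsilon>\<^sup>\<alpha>)\<close> in each unit interval.

  Fix \<open>x\<close> with \<open>f (x + b\<^sub>1) \<noteq> 0\<close>. Solving the equation for its term with the smallest shift
  shows that, where \<open>\<bar>u\<^sub>1\<bar>\<close> is not small, some other term is comparable to it. So the size
  of \<open>f\<close> propagates to the right along sums of the gaps \<open>b\<^sub>j - b\<^sub>1 \<ge> \<delta>\<close>: after \<open>i\<close> steps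
  it is at least \<open>(\<theta> / M n)^i exp (-C i\<^sup>2) \<bar>f (x + b\<^sub>1)\<bar>\<close> at a point beyond \<open>x + i \<delta>\<close>, as
  long as \<open>\<bar>u\<^sub>1\<bar> \<ge> \<theta> exp (-C i)\<close> at all shifts reached in \<open>i\<close> steps; super-Gaussian decay
  forbids this. There are at most \<open>n^i\<close> such shifts, so with \<open>C = ln (2n) / \<alpha>\<close> the
  exceptional \<open>x\<close> form a set of measure \<open>O(\<theta>\<^sup>\<alpha>)\<close>, and letting \<open>\<theta> \<rightarrow> 0\<close> gives \<open>f = 0\<close>
  almost everywhere.

  For linear independence, group a vanishing combination of time-frequency shifts by the time
  shift: the coefficient of the largest time shift is a nonzero trigonometric polynomial.\<close>

lemma lipschitz_of_vector_derivative_bound: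
  fixes g :: "real \<Rightarrow> 'a::real_normed_vector"
  assumes "\<And>y. (g has_vector_derivative g' y) (at y)" and "\<And>y. norm (g' y) \<le> B"
  shows "norm (g x - g y) \<le> B * \<bar>x - y\<bar>"
proof -
  have "norm (g x - g y) \<le> B * norm (x - y)"
  proof (rule differentiable_bound[where S = UNIV and f' = "\<lambda>z h. h *\<^sub>R g' z"])
    show "(g has_derivative (\<lambda>h. h *\<^sub>R g' z)) (at z within UNIV)" for z
      using assms(1) by (simp add: has_vector_derivative_def)
    show "onorm (\<lambda>h. h *\<^sub>R g' z) \<le> B" for z
      using assms(2) onorm_scaleR_left[OF bounded_linear_ident, of "g' z"] by (simp add: onorm_id)
  qed auto
  then show ?thesis by simp
qed

lemma Re_cnj_mult_ge_half_norm_sq: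
  assumes "cmod (w - c) \<le> cmod c / 2"
  shows "cmod c ^ 2 / 2 \<le> Re (cnj c * w)"
proof -
  have "Re (cnj c * c) = cmod c ^ 2"
    by (simp add: cmod_power2 power2_eq_square[symmetric])
  then have "Re (cnj c * w) = cmod c ^ 2 + Re (cnj c * (w - c))"
    by (simp add: algebra_simps)
  moreover have "\<bar>Re (cnj c * (w - c))\<bar> \<le> cmod c * cmod (w - c)"
    using abs_Re_le_cmod[of "cnj c * (w - c)"] by (simp add: norm_mult)
  moreover have "cmod c * cmod (w - c) \<le> cmod c * (cmod c / 2)"
    using assms by (intro mult_left_mono) auto
  ultimately show ?thesis
    by (simp add: power2_eq_square)
qed

lemma emeasure_lborel_le_of_diameter:
  fixes S :: "real set"
  assumes "\<And>x y. x \<in> S \<Longrightarrow> y \<in> S \<Longrightarrow> x \<le> y \<Longrightarrow> y - x \<le> d" and "0 \<le> d"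
  shows "emeasure lborel S \<le> ennreal (2 * d)"
proof (cases "S = {}")
  case False
  then obtain y0 where y0: "y0 \<in> S" by blast
  have "S \<subseteq> {y0 - d .. y0 + d}"
  proof
    fix y assume "y \<in> S"
    then show "y \<in> {y0 - d .. y0 + d}"
      using assms(1)[OF y0 \<open>y \<in> S\<close>] assms(1)[OF \<open>y \<in> S\<close> y0] by (cases "y0 \<le> y") auto
  qed
  then have "emeasure lborel S \<le> emeasure lborel {y0 - d .. y0 + d}"
    by (intro emeasure_mono) auto
  then show ?thesis using assms(2) by simp
qed simp

lemma emeasure_UN_le_card_mult:
  assumes "finite I" and "\<And>i. i \<in> I \<Longrightarrow> A i \<in> sets M"
    and "\<And>i. i \<in> I \<Longrightarrow> emeasure M (A i) \<le> ennreal c"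
  shows "emeasure M (\<Union>i\<in>I. A i) \<le> ennreal (real (card I) * c)"
proof -
  have "emeasure M (\<Union>i\<in>I. A i) \<le> (\<Sum>i\<in>I. emeasure M (A i))"
    by (rule emeasure_subadditive_finite) (use assms in auto)
  also have "\<dots> \<le> (\<Sum>i\<in>I. ennreal c)"
    by (rule sum_mono) (rule assms(3))
  also have "\<dots> = ennreal (real (card I) * c)"
    by (simp add: ennreal_mult' ennreal_of_nat_eq_real_of_nat)
  finally show ?thesis .
qed

lemma emeasure_eq_0_of_powr_bounds:
  assumes "\<alpha> > 0" and "\<And>\<theta>. 0 < \<theta> \<Longrightarrow> \<theta> \<le> 1 \<Longrightarrow> emeasure M A \<le> ennreal (K * \<theta> powr \<alpha>)"
  shows "emeasure M A = 0"
proof -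
  have "emeasure M A \<le> 0 + ennreal e" if e: "e > 0" for e
  proof -
    define K' where "K' = max K 1"
    define \<theta> where "\<theta> = min 1 ((e / K') powr (1 / \<alpha>))"
    have K': "K \<le> K'" "K' > 0" and \<theta>: "0 < \<theta>" "\<theta> \<le> 1"
      unfolding \<theta>_def K'_def using e by auto
    have "\<theta> powr \<alpha> \<le> ((e / K') powr (1 / \<alpha>)) powr \<alpha>"
      using \<theta> assms(1) by (intro powr_mono2) (auto simp: \<theta>_def)
    also have "\<dots> = e / K'"
      using assms(1) e K' by (simp add: powr_powr)
    finally have "K' * \<theta> powr \<alpha> \<le> e"
      using K' by (simp add: field_simps)
    moreover have "K * \<theta> powr \<alpha> \<le> K' * \<theta> powr \<alpha>"
      using K' by (intro mult_right_mono) auto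
    ultimately have "ennreal (K * \<theta> powr \<alpha>) \<le> ennreal e"
      by (intro ennreal_leI) linarith
    then show ?thesis
      using assms(2)[OF \<theta>] by simp
  qed
  then have "emeasure M A \<le> 0"
    by (rule ennreal_le_epsilon)
  then show ?thesis by simp
qed

lemma AE_lborel_if_unit_intervals:
  fixes P :: "real \<Rightarrow> bool"
  assumes "\<And>k::int. {x\<in>{of_int k..of_int k + 1}. \<not> P x} \<in> null_sets lborel"
  shows "AE x in lborel. P x"
proof (rule AE_I')
  show "(\<Union>k::int. {x\<in>{of_int k..of_int k + 1}. \<not> P x}) \<in> null_sets lborel"
    using assms by (intro null_sets_UN') auto
  show "{x \<in> space lborel. \<not> P x} \<subseteq> (\<Union>k::int. {x\<in>{of_int k..of_int k + 1}. \<not> P x})"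
  proof
    fix x assume "x \<in> {x \<in> space lborel. \<not> P x}"
    then show "x \<in> (\<Union>k::int. {x\<in>{of_int k..of_int k + 1}. \<not> P x})"
      by (intro UN_I[of "\<lfloor>x\<rfloor>"]) auto
  qed
qed

lemma emeasure_lborel_translate:
  fixes A :: "real set"
  assumes "A \<in> sets borel"
  shows "emeasure lborel ((\<lambda>x. x + s) -` A) = emeasure lborel A"
proof -
  have "emeasure lborel A = emeasure (distr lborel borel ((+) s)) A"
    by (simp add: lborel_distr_plus)
  also have "\<dots> = emeasure lborel ((+) s -` A \<inter> space lborel)"
    by (rule emeasure_distr) (use assms in auto)
  also have "(+) s -` A \<inter> space lborel = (\<lambda>x. x + s) -` A"
    by (auto simp: add.commute)
  finally show ?thesis by simp
qed

lemma AE_lborel_translate: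
  assumes "AE x in lborel. P x"
  shows "AE x in lborel. P (x + (s::real))"
proof -
  have "AE x in distr lborel borel ((+) s). P x"
    unfolding lborel_distr_plus by (rule assms)
  then have "AE x in lborel. P (s + x)"
    by (rule AE_distrD[rotated]) simp
  then show ?thesis by (simp add: add.commute)
qed

lemma suminf_ennreal_mult_half_power:
  assumes "A \<ge> 0"
  shows "(\<Sum>i. ennreal (A * (1/2) ^ i)) = ennreal (2 * A)"
proof -
  have "(\<Sum>i. ennreal (A * (1/2) ^ i)) = ennreal (\<Sum>i. A * (1/2::real) ^ i)"
    by (rule suminf_ennreal2) (use assms in \<open>auto intro: summable_mult summable_geometric\<close>)
  also have "(\<Sum>i. A * (1/2::real) ^ i) = A * (\<Sum>i. (1/2::real) ^ i)"
    by (rule suminf_mult) (rule summable_geometric, simp)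
  also have "(\<Sum>i. (1/2::real) ^ i) = 2"
    by (subst suminf_geometric) auto
  finally show ?thesis
    by (simp add: mult.commute)
qed

lemma uniform_bound_finite:
  fixes u :: "'i \<Rightarrow> 'a \<Rightarrow> 'b::real_normed_vector"
  assumes "finite I" and "\<forall>j\<in>I. \<exists>M. \<forall>x. norm (u j x) \<le> M"
  obtains M where "M \<ge> 1" "\<And>j x. j \<in> I \<Longrightarrow> norm (u j x) \<le> M"
proof -
  obtain Mf where Mf: "\<And>j x. j \<in> I \<Longrightarrow> norm (u j x) \<le> Mf j"
    using assms(2) by metis
  show thesis
  proof (rule that[of "Max (insert 1 (Mf ` I))"])
    show "norm (u j x) \<le> Max (insert 1 (Mf ` I))" if "j \<in> I" for j x
      using Mf[OF that, of x] that assms(1) by (meson Max_ge finite_imageI finite_insert image_eqI insertCI order_trans)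
  qed (use assms(1) in simp)
qed

lemma uniform_gap_finite:
  fixes d :: "'i \<Rightarrow> real"
  assumes "finite I" and "\<And>j. j \<in> I \<Longrightarrow> 0 < d j"
  obtains \<delta> where "\<delta> > 0" "\<And>j. j \<in> I \<Longrightarrow> \<delta> \<le> d j"
proof (rule that[of "Min (insert 1 (d ` I))"])
  show "Min (insert 1 (d ` I)) > 0"
    using assms by (subst Min_gr_iff) auto
  show "Min (insert 1 (d ` I)) \<le> d j" if "j \<in> I" for j
    using assms(1) that by (intro Min_le) auto
qed

lemma obtain_enumeration_least_first:
  fixes A :: "'a::linorder set"
  assumes "finite A"
  obtains b where "bij_betw b {1..card A} A" "\<And>j. j \<in> {1..card A} \<Longrightarrow> b 1 \<le> b j"
proof -
  define xs where "xs = sorted_list_of_set A"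
  have xs: "distinct xs" "sorted xs" "set xs = A" "length xs = card A"
    unfolding xs_def using assms by auto
  have "bij_betw (\<lambda>j. j - 1) {1..card A} {..<card A}"
    by (rule bij_betw_byWitness[where f' = Suc]) auto
  moreover have "bij_betw ((!) xs) {..<card A} A"
    using xs by (intro bij_betw_nth) auto
  ultimately have "bij_betw ((!) xs \<circ> (\<lambda>j. j - 1)) {1..card A} A"
    by (rule bij_betw_trans)
  then have "bij_betw (\<lambda>j. xs ! (j - 1)) {1..card A} A"
    by (simp add: comp_def)
  moreover have "xs ! (1 - 1) \<le> xs ! (j - 1)" if "j \<in> {1..card A}" for j
    using xs that by (intro sorted_nth_mono) auto
  ultimately show thesis
    using that by auto
qed

section \<open>Exponential sums\<close>

text \<open>\<open>W l\<close> is the coefficient of the frequency \<open>F l\<close>. Trigonometric polynomials need only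
  \<open>F = id\<close>; other \<open>F\<close> arise when a frequency is factored out.\<close>

definition exp_sum :: "(real \<Rightarrow> complex) \<Rightarrow> (real \<Rightarrow> real) \<Rightarrow> real set \<Rightarrow> real \<Rightarrow> complex" where
  "exp_sum W F L y = (\<Sum>l\<in>L. W l * exp (\<i> * of_real (F l * y)))"

lemma exp_i_mult_has_vector_derivative:
  "((\<lambda>y. exp (\<i> * of_real (l * y))) has_vector_derivative \<i> * of_real l * exp (\<i> * of_real (l * y)))
     (at y within T)"
proof -
  have "(\<lambda>y. exp (\<i> * of_real (l * y))) = (\<lambda>y. exp (y *\<^sub>R (\<i> * of_real l)))"
    by (auto simp: scaleR_conv_of_real mult_ac)
  then show ?thesis
    using exp_scaleR_has_vector_derivative_right[of "\<i> * of_real l" y T]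
    by (simp add: scaleR_conv_of_real mult_ac)
qed

lemma exp_sum_has_vector_derivative:
  "(exp_sum W F L has_vector_derivative exp_sum (\<lambda>l. W l * (\<i> * of_real (F l))) F L y) (at y within T)"
  unfolding exp_sum_def
  by (rule has_vector_derivative_eq_rhs[OF has_vector_derivative_sum
        [OF has_vector_derivative_mult_right[OF exp_i_mult_has_vector_derivative]]])
     (simp add: mult_ac)

lemma norm_exp_sum_le: "cmod (exp_sum W F L y) \<le> (\<Sum>l\<in>L. cmod (W l))"
  unfolding exp_sum_def by (rule order_trans[OF norm_sum]) (simp add: norm_mult)

lemma exp_sum_lipschitz:
  "cmod (exp_sum W F L x - exp_sum W F L y) \<le> (\<Sum>l\<in>L. cmod (W l * (\<i> * of_real (F l)))) * \<bar>x - y\<bar>"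
  by (rule lipschitz_of_vector_derivative_bound[OF exp_sum_has_vector_derivative norm_exp_sum_le])

lemma continuous_on_exp_sum: "continuous_on UNIV (exp_sum W F L)"
  by (rule continuous_on_vector_derivative) (rule exp_sum_has_vector_derivative)

lemma borel_measurable_exp_sum [measurable]: "exp_sum W F L \<in> borel_measurable borel"
  by (rule borel_measurable_continuous_onI) (rule continuous_on_exp_sum)

lemma exp_sum_shift_frequencies:
  "exp_sum W id L y = exp (\<i> * of_real (m * y)) * exp_sum W (\<lambda>l. l - m) L y"
  unfolding exp_sum_def sum_distrib_left
  by (rule sum.cong) (simp_all add: algebra_simps flip: exp_add)

lemma trig_poly_imp_exp_sum:
  assumes "trig_poly u" and "u \<noteq> (\<lambda>x. 0)"
  obtains W L where "finite L" "L \<noteq> {}" "\<forall>l\<in>L. W l \<noteq> 0" "u = exp_sum W id L"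
proof -
  obtain m a c where u: "u = (\<lambda>x. \<Sum>j<(m::nat). c j * exp (2 * of_real pi * \<i> * of_real (a j * x)))"
    using assms(1) unfolding trig_poly_def by blast
  define fr where "fr j = 2 * pi * a j" for j
  define L0 where "L0 = fr ` {..<m}"
  define W where "W l = (\<Sum>j\<in>{j. j \<in> {..<m} \<and> fr j = l}. c j)" for l
  have e: "exp (2 * of_real pi * \<i> * of_real (a j * x)) = exp (\<i> * of_real (fr j * x))" for j x
    unfolding fr_def by (simp add: mult_ac)
  have "u x = (\<Sum>j<m. c j * exp (\<i> * of_real (fr j * x)))" for x
    unfolding u e ..
  also have "\<dots> x = (\<Sum>l\<in>L0. \<Sum>j\<in>{j. j \<in> {..<m} \<and> fr j = l}. c j * exp (\<i> * of_real (fr j * x)))" for x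
    unfolding L0_def by (rule sum.image_gen) simp
  also have "\<dots> x = exp_sum W id L0 x" for x
    unfolding exp_sum_def W_def sum_distrib_right by (intro sum.cong refl) auto
  finally have u0: "u x = exp_sum W id L0 x" for x .
  define L where "L = {l\<in>L0. W l \<noteq> 0}"
  have fin: "finite L"
    unfolding L_def L0_def by auto
  have u1: "u = exp_sum W id L"
    unfolding u0 exp_sum_def L_def by (intro ext sum.mono_neutral_right) (auto simp: L0_def)
  have "L \<noteq> {}"
  proof
    assume "L = {}"
    then have "u = (\<lambda>x. 0)"
      using u1 by (auto simp: exp_sum_def)
    with assms(2) show False by simp
  qed
  with fin u1 show thesis
    using that unfolding L_def by blast
qed

section \<open>Small values of exponential sums\<close>

text \<open>With \<open>c = g' x\<^sub>0\<close>, the function \<open>Re (cnj c * g)\<close> grows with slope at least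
  \<open>\<bar>c\<bar>\<^sup>2 / 2\<close> near \<open>x\<^sub>0\<close> but is smaller than \<open>\<bar>c\<bar> \<epsilon>\<close> in modulus wherever \<open>\<bar>g\<bar> < \<epsilon>\<close>.\<close>

lemma sublevel_gap_near_large_derivative:
  fixes g g' :: "real \<Rightarrow> complex"
  assumes vd: "\<And>y. (g has_vector_derivative g' y) (at y)"
    and lip: "\<And>x y. cmod (g' x - g' y) \<le> B * \<bar>x - y\<bar>" and B: "B > 0"
    and x0: "\<rho> \<le> cmod (g' x0)" and rho: "\<rho> > 0"
    and near: "\<bar>y1 - x0\<bar> \<le> \<rho> / (2 * B)" "\<bar>y2 - x0\<bar> \<le> \<rho> / (2 * B)"
    and small: "cmod (g y1) < \<epsilon>" "cmod (g y2) < \<epsilon>" and le: "y1 \<le> y2"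
  shows "y2 - y1 \<le> 4 * \<epsilon> / \<rho>"
proof (cases "y1 = y2")
  case True
  then show ?thesis using le_less_trans[OF norm_ge_zero small(1)] rho by simp
next
  case False
  with le have lt: "y1 < y2" by simp
  define c where "c = g' x0"
  have c: "cmod c > 0" "\<rho> \<le> cmod c" using x0 rho unfolding c_def by linarith+
  define \<phi> where "\<phi> y = Re (cnj c * g y)" for y
  have d\<phi>: "\<And>y. (\<phi> has_real_derivative Re (cnj c * g' y)) (at y)"
    unfolding \<phi>_def by (intro has_field_derivative_Re has_vector_derivative_mult_right vd)
  then obtain z where z: "y1 < z" "z < y2" "\<phi> y2 - \<phi> y1 = (y2 - y1) * Re (cnj c * g' z)"
    using MVT2[OF lt, of \<phi> "\<lambda>y. Re (cnj c * g' y)"] d\<phi> by blast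
  have "cmod (g' z - c) \<le> B * \<bar>z - x0\<bar>"
    using lip unfolding c_def .
  also have "\<dots> \<le> B * (\<rho> / (2 * B))"
    using near z B by (intro mult_left_mono) auto
  also have "\<dots> \<le> cmod c / 2"
    using B c by simp
  finally have "cmod c ^ 2 / 2 \<le> Re (cnj c * g' z)"
    by (rule Re_cnj_mult_ge_half_norm_sq)
  then have slope: "(y2 - y1) * (cmod c ^ 2 / 2) \<le> \<phi> y2 - \<phi> y1"
    unfolding z(3) using lt by (intro mult_left_mono) auto
  have "\<bar>\<phi> y\<bar> < cmod c * \<epsilon>" if "cmod (g y) < \<epsilon>" for y
  proof -
    have "\<bar>\<phi> y\<bar> \<le> cmod c * cmod (g y)"
      unfolding \<phi>_def using abs_Re_le_cmod[of "cnj c * g y"] by (simp add: norm_mult)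
    also have "\<dots> < cmod c * \<epsilon>"
      using that c by simp
    finally show ?thesis .
  qed
  then have "\<bar>\<phi> y1\<bar> < cmod c * \<epsilon>" "\<bar>\<phi> y2\<bar> < cmod c * \<epsilon>"
    using small by auto
  then have "(y2 - y1) * (cmod c ^ 2 / 2) < 2 * cmod c * \<epsilon>"
    using slope by linarith
  then have "((y2 - y1) * cmod c) * cmod c < (4 * \<epsilon>) * cmod c"
    by (simp add: power2_eq_square field_simps)
  then have "y2 - y1 < 4 * \<epsilon> / cmod c"
    using c by (simp add: pos_less_divide_eq)
  also have "\<dots> \<le> 4 * \<epsilon> / \<rho>"
    using c rho le_less_trans[OF norm_ge_zero small(1)] by (intro divide_left_mono) auto
  finally show ?thesis by simp
qed

text \<open>Cut \<open>[a, a + 1]\<close> into \<open>N \<approx> 2B/\<rho>\<close> windows of length \<open>1/N \<le> \<rho> / (2B)\<close>: a window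
  containing a point with \<open>\<bar>g'\<bar> \<ge> \<rho>\<close> meets \<open>{\<bar>g\<bar> < \<epsilon>}\<close> in measure \<open>\<le> 8\<epsilon>/\<rho>\<close>,
  every other window lies in \<open>{\<bar>g'\<bar> < \<rho>}\<close>.\<close>

lemma emeasure_sublevel_le_derivative_sublevel:
  fixes g g' :: "real \<Rightarrow> complex"
  assumes vd: "\<And>y. (g has_vector_derivative g' y) (at y)"
    and lip: "\<And>x y. cmod (g' x - g' y) \<le> B * \<bar>x - y\<bar>"
    and g'm [measurable]: "g' \<in> borel_measurable borel"
    and B: "B > 0" and rho: "\<rho> > 0" "\<rho> \<le> 1" and eps: "\<epsilon> > 0"
  shows "emeasure lborel {x\<in>{a..a+1}. cmod (g x) < \<epsilon>}
    \<le> emeasure lborel {x\<in>{a..a+1}. cmod (g' x) < \<rho>} + ennreal ((2 * B + 3) * 8 * \<epsilon> / \<rho>^2)"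
proof -
  have gm [measurable]: "g \<in> borel_measurable borel"
    by (intro borel_measurable_continuous_onI continuous_on_vector_derivative) (use vd in auto)
  define N :: nat where "N = nat \<lceil>2 * B / \<rho>\<rceil> + 1"
  have "0 \<le> 2 * B / \<rho>"
    using B rho by simp
  then have N: "2 * B / \<rho> \<le> real N" "real N \<le> 2 * B / \<rho> + 2" "real N > 0"
    unfolding N_def by (simp_all add: of_nat_nat)
      (use le_of_int_ceiling[of "2 * B / \<rho>"] of_int_ceiling_le_add_one[of "2 * B / \<rho>"] in linarith)+
  define Wk where "Wk k = {x\<in>{a..a+1}. real k \<le> (x - a) * N \<and> (x - a) * N \<le> real k + 1}" for k :: nat
  define G where "G = {k\<in>{..N}. \<exists>x0\<in>Wk k. \<rho> \<le> cmod (g' x0)}"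
  define A where "A = {x\<in>{a..a+1}. cmod (g' x) < \<rho>}"
  define P where "P k = {y\<in>Wk k. cmod (g y) < \<epsilon>}" for k
  have Am [measurable]: "A \<in> sets lborel"
    unfolding A_def by measurable
  have Pm [measurable]: "P k \<in> sets lborel" for k
    unfolding P_def Wk_def by measurable
  have finG: "finite G"
    unfolding G_def by auto
  then have UP: "(\<Union>k\<in>G. P k) \<in> sets lborel"
    using Pm by (intro sets.finite_UN) auto
  have cover: "{x\<in>{a..a+1}. cmod (g x) < \<epsilon>} \<subseteq> A \<union> (\<Union>k\<in>G. P k)"
  proof
    fix x assume x: "x \<in> {x\<in>{a..a+1}. cmod (g x) < \<epsilon>}"
    define k where "k = nat \<lfloor>(x - a) * N\<rfloor>"
    have "0 \<le> (x - a) * N" "(x - a) * N \<le> N"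
      using x N by (auto simp: mult_left_le_one_le)
    then have k: "x \<in> Wk k" "k \<le> N"
      using x unfolding k_def Wk_def by (auto simp: nat_le_iff floor_le_iff)
    show "x \<in> A \<union> (\<Union>k\<in>G. P k)"
    proof (cases "k \<in> G")
      case True
      then show ?thesis using k x unfolding P_def by auto
    next
      case False
      then have "cmod (g' x) < \<rho>"
        using k unfolding G_def by (auto simp: not_le)
      then show ?thesis using x unfolding A_def by auto
    qed
  qed
  have piece: "emeasure lborel (P k) \<le> ennreal (8 * \<epsilon> / \<rho>)" if kG: "k \<in> G" for k
  proof -
    obtain x0 where x0: "x0 \<in> Wk k" "\<rho> \<le> cmod (g' x0)"
      using kG by (auto simp: G_def)
    have near: "\<bar>y - x0\<bar> \<le> \<rho> / (2 * B)" if "y \<in> Wk k" for y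
    proof -
      have "\<bar>(y - x0) * N\<bar> \<le> 1"
        using that x0(1) unfolding Wk_def by (auto simp: algebra_simps)
      then have "\<bar>y - x0\<bar> * N \<le> 1"
        by (simp add: abs_mult)
      then have "\<bar>y - x0\<bar> \<le> 1 / N"
        using N by (simp add: pos_le_divide_eq)
      also have "\<dots> \<le> \<rho> / (2 * B)"
        using N B rho by (simp add: field_simps)
      finally show ?thesis .
    qed
    have "emeasure lborel (P k) \<le> ennreal (2 * (4 * \<epsilon> / \<rho>))"
      unfolding P_def
      by (rule emeasure_lborel_le_of_diameter)
         (use sublevel_gap_near_large_derivative[OF vd lip B x0(2) rho(1)] near eps rho in auto)
    then show ?thesis by simp
  qed
  have "card G \<le> N + 1"
    using card_mono[of "{..N}" G] unfolding G_def by auto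
  then have "real (card G) \<le> 2 * B / \<rho> + 3"
    using N by linarith
  also have "\<dots> \<le> (2 * B + 3) / \<rho>"
    using rho by (simp add: field_simps)
  finally have "real (card G) * (8 * \<epsilon> / \<rho>) \<le> (2 * B + 3) / \<rho> * (8 * \<epsilon> / \<rho>)"
    using eps rho by (intro mult_right_mono) auto
  also have "\<dots> = (2 * B + 3) * 8 * \<epsilon> / \<rho>^2"
    by (simp add: power2_eq_square)
  finally have card: "real (card G) * (8 * \<epsilon> / \<rho>) \<le> (2 * B + 3) * 8 * \<epsilon> / \<rho>^2" .
  have "emeasure lborel {x\<in>{a..a+1}. cmod (g x) < \<epsilon>} \<le> emeasure lborel (A \<union> (\<Union>k\<in>G. P k))"
    by (rule emeasure_mono[OF cover]) (use Am UP in auto)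
  also have "\<dots> \<le> emeasure lborel A + emeasure lborel (\<Union>k\<in>G. P k)"
    by (rule emeasure_subadditive) (use Am UP in auto)
  also have "emeasure lborel (\<Union>k\<in>G. P k) \<le> ennreal (real (card G) * (8 * \<epsilon> / \<rho>))"
    by (rule emeasure_UN_le_card_mult) (use piece finG Pm in auto)
  also have "\<dots> \<le> ennreal ((2 * B + 3) * 8 * \<epsilon> / \<rho>^2)"
    using card by (rule ennreal_leI)
  finally show ?thesis
    unfolding A_def by (simp add: add_left_mono)
qed

definition small_values_bound :: "(real \<Rightarrow> complex) \<Rightarrow> real \<Rightarrow> real \<Rightarrow> bool" where
  "small_values_bound g K \<alpha> \<longleftrightarrow> K > 0 \<and> \<alpha> > 0 \<and>
     (\<forall>a \<epsilon>. 0 < \<epsilon> \<longrightarrow> \<epsilon> \<le> 1 \<longrightarrow>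
        emeasure lborel {x\<in>{a..a+1}. cmod (g x) < \<epsilon>} \<le> ennreal (K * \<epsilon> powr \<alpha>))"

lemma small_values_boundD:
  assumes "small_values_bound g K \<alpha>"
  shows "K > 0" "\<alpha> > 0"
    and "0 < \<epsilon> \<Longrightarrow> \<epsilon> \<le> 1 \<Longrightarrow>
      emeasure lborel {x\<in>{a..a+1}. cmod (g x) < \<epsilon>} \<le> ennreal (K * \<epsilon> powr \<alpha>)"
  using assms unfolding small_values_bound_def by auto

lemma small_values_bound_cong_norm:
  assumes "\<And>x. cmod (g x) = cmod (h x)"
  shows "small_values_bound g K \<alpha> \<longleftrightarrow> small_values_bound h K \<alpha>"
  unfolding small_values_bound_def assms ..

lemma small_values_bound_const_norm:
  assumes "\<And>x. cmod (g x) = r" and "r > 0"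
  shows "small_values_bound g (1 / r) 1"
  unfolding small_values_bound_def
proof (intro conjI allI impI)
  fix a \<epsilon> :: real
  assume "0 < \<epsilon>" "\<epsilon> \<le> 1"
  show "emeasure lborel {x\<in>{a..a+1}. cmod (g x) < \<epsilon>} \<le> ennreal (1 / r * \<epsilon> powr 1)"
  proof (cases "\<epsilon> \<le> r")
    case True
    then show ?thesis using assms(1) by simp
  next
    case False
    have "emeasure lborel {x\<in>{a..a+1}. cmod (g x) < \<epsilon>} \<le> emeasure lborel {a..a+1}"
      by (rule emeasure_mono) auto
    also have "\<dots> \<le> ennreal (1 / r * \<epsilon> powr 1)"
      using False \<open>0 < \<epsilon>\<close> assms(2) by (simp add: field_simps)
    finally show ?thesis .
  qed
qed (use assms in auto)

lemma small_values_bound_translate: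
  assumes "small_values_bound g K \<alpha>" and [measurable]: "g \<in> borel_measurable borel"
  shows "small_values_bound (\<lambda>x. g (x + s)) K \<alpha>"
  unfolding small_values_bound_def
proof (intro conjI allI impI)
  fix a \<epsilon> :: real
  assume "0 < \<epsilon>" "\<epsilon> \<le> 1"
  have "{y\<in>{a+s..a+s+1}. cmod (g y) < \<epsilon>} \<in> sets borel"
    by measurable
  moreover have "{x\<in>{a..a+1}. cmod (g (x + s)) < \<epsilon>} = (\<lambda>x. x + s) -` {y\<in>{a+s..a+s+1}. cmod (g y) < \<epsilon>}"
    by auto
  ultimately have "emeasure lborel {x\<in>{a..a+1}. cmod (g (x + s)) < \<epsilon>}
      = emeasure lborel {y\<in>{a+s..a+s+1}. cmod (g y) < \<epsilon>}"
    using emeasure_lborel_translate by presburger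
  also have "\<dots> \<le> ennreal (K * \<epsilon> powr \<alpha>)"
    using small_values_boundD(3)[OF assms(1) \<open>0 < \<epsilon>\<close> \<open>\<epsilon> \<le> 1\<close>, of "a + s"] by simp
  finally show "emeasure lborel {x\<in>{a..a+1}. cmod (g (x + s)) < \<epsilon>} \<le> ennreal (K * \<epsilon> powr \<alpha>)" .
qed (use small_values_boundD[OF assms(1)] in auto)

text \<open>The window estimate with \<open>\<rho> = \<epsilon> powr (1/3)\<close> balances both terms.\<close>

lemma small_values_bound_antiderivative:
  fixes g g' :: "real \<Rightarrow> complex"
  assumes vd: "\<And>y. (g has_vector_derivative g' y) (at y)"
    and lip: "\<And>x y. cmod (g' x - g' y) \<le> B * \<bar>x - y\<bar>"
    and g'm: "g' \<in> borel_measurable borel" and B: "B > 0"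
    and g': "small_values_bound g' K \<alpha>"
  shows "small_values_bound g (K + (2 * B + 3) * 8) (min (1/3) (\<alpha> / 3))"
  unfolding small_values_bound_def
proof (intro conjI allI impI)
  note K = small_values_boundD[OF g']
  show "K + (2 * B + 3) * 8 > 0" "min (1/3) (\<alpha> / 3) > 0"
    using K B by auto
  fix a \<epsilon> :: real
  assume e: "0 < \<epsilon>" "\<epsilon> \<le> 1"
  define \<rho> where "\<rho> = \<epsilon> powr (1/3)"
  have rho: "\<rho> > 0" "\<rho> \<le> 1"
    unfolding \<rho>_def using e by (auto intro: powr_le1)
  have "\<rho>^2 = \<epsilon> powr (2/3)"
    unfolding \<rho>_def using e by (simp add: powr_powr flip: powr_realpow)
  moreover have "\<epsilon> powr (1/3) * \<epsilon> powr (2/3) = \<epsilon>"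
    using e by (simp flip: powr_add)
  ultimately have window: "(2 * B + 3) * 8 * \<epsilon> / \<rho>^2 = (2 * B + 3) * 8 * \<epsilon> powr (1/3)"
    using e by (simp add: field_simps)
  have "\<rho> powr \<alpha> = \<epsilon> powr (\<alpha> / 3)"
    unfolding \<rho>_def using e by (simp add: powr_powr)
  then have deriv: "emeasure lborel {x\<in>{a..a+1}. cmod (g' x) < \<rho>} \<le> ennreal (K * \<epsilon> powr (\<alpha> / 3))"
    using K(3)[OF rho] by simp
  have "K * \<epsilon> powr (\<alpha> / 3) + (2 * B + 3) * 8 * \<epsilon> powr (1/3)
      \<le> K * \<epsilon> powr min (1/3) (\<alpha> / 3) + (2 * B + 3) * 8 * \<epsilon> powr min (1/3) (\<alpha> / 3)"
    using K B e by (intro add_mono mult_left_mono powr_mono') auto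
  then have sum: "K * \<epsilon> powr (\<alpha> / 3) + (2 * B + 3) * 8 * \<epsilon> powr (1/3)
      \<le> (K + (2 * B + 3) * 8) * \<epsilon> powr min (1/3) (\<alpha> / 3)"
    by (simp add: algebra_simps)
  have "emeasure lborel {x\<in>{a..a+1}. cmod (g x) < \<epsilon>}
      \<le> ennreal (K * \<epsilon> powr (\<alpha> / 3)) + ennreal ((2 * B + 3) * 8 * \<epsilon> powr (1/3))"
    using emeasure_sublevel_le_derivative_sublevel[OF vd lip g'm B rho e(1), of a] deriv
    unfolding window by (meson add_right_mono order_trans)
  also have "\<dots> = ennreal (K * \<epsilon> powr (\<alpha> / 3) + (2 * B + 3) * 8 * \<epsilon> powr (1/3))"
    by (rule ennreal_plus[symmetric]) (use K B in auto)
  also have "\<dots> \<le> ennreal ((K + (2 * B + 3) * 8) * \<epsilon> powr min (1/3) (\<alpha> / 3))"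
    using sum by (rule ennreal_leI)
  finally show "emeasure lborel {x\<in>{a..a+1}. cmod (g x) < \<epsilon>}
      \<le> ennreal ((K + (2 * B + 3) * 8) * \<epsilon> powr min (1/3) (\<alpha> / 3))" .
qed

text \<open>A Remez-type inequality for exponential sums, by induction on the number of frequencies:
  after factoring out the frequency \<open>m\<close>, the derivative is an exponential sum with one
  frequency fewer.\<close>

lemma exp_sum_small_values:
  assumes "finite L" "L \<noteq> {}" "\<forall>l\<in>L. W l \<noteq> 0"
  shows "\<exists>K \<alpha>. small_values_bound (exp_sum W id L) K \<alpha>"
  using assms
proof (induction L arbitrary: W rule: finite_ne_induct)
  case (singleton m)
  have "cmod (exp_sum W id {m} x) = cmod (W m)" for x
    by (simp add: exp_sum_def norm_mult)
  then have "small_values_bound (exp_sum W id {m}) (1 / cmod (W m)) 1"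
    using singleton by (intro small_values_bound_const_norm) auto
  then show ?case by blast
next
  case (insert m L)
  define F where "F l = l - m" for l
  define W' where "W' l = W l * (\<i> * of_real (F l))" for l
  have "\<forall>l\<in>L. W' l \<noteq> 0"
    using insert.prems insert.hyps by (auto simp: W'_def F_def)
  then obtain K \<alpha> where IH: "small_values_bound (exp_sum W' id L) K \<alpha>"
    using insert.IH by blast
  define B where "B = (\<Sum>l\<in>insert m L. cmod (W' l * (\<i> * of_real (F l)))) + 1"
  have "B > 0"
    unfolding B_def by (simp add: add_nonneg_pos sum_nonneg)
  have norm_g: "cmod (exp_sum W id (insert m L) x) = cmod (exp_sum W F (insert m L) x)" for x
    unfolding exp_sum_shift_frequencies[where m = m] F_def by (simp add: norm_mult)
  have norm_g': "cmod (exp_sum W' F (insert m L) x) = cmod (exp_sum W' id L x)" for x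
    unfolding exp_sum_shift_frequencies[where m = m] F_def
    using insert.hyps by (simp add: norm_mult exp_sum_def W'_def F_def)
  have "small_values_bound (exp_sum W F (insert m L)) (K + (2 * B + 3) * 8) (min (1/3) (\<alpha> / 3))"
  proof (rule small_values_bound_antiderivative[OF _ _ _ \<open>B > 0\<close>])
    show "(exp_sum W F (insert m L) has_vector_derivative exp_sum W' F (insert m L) y) (at y)" for y
      unfolding W'_def by (rule exp_sum_has_vector_derivative)
    show "cmod (exp_sum W' F (insert m L) x - exp_sum W' F (insert m L) y) \<le> B * \<bar>x - y\<bar>" for x y
      by (rule order_trans[OF exp_sum_lipschitz]) (auto simp: B_def intro: mult_right_mono)
    show "small_values_bound (exp_sum W' F (insert m L)) K \<alpha>"
      using IH small_values_bound_cong_norm norm_g' by blast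
  qed simp
  then show ?case
    using small_values_bound_cong_norm norm_g by blast
qed

lemma exp_sum_eq_0_imp_coeff_eq_0:
  assumes "finite L" and zero: "\<And>x. exp_sum W id L x = 0" and "l \<in> L"
  shows "W l = 0"
proof (rule ccontr)
  assume "W l \<noteq> 0"
  define L' where "L' = {l\<in>L. W l \<noteq> 0}"
  have "finite L'" "L' \<noteq> {}" "\<forall>l\<in>L'. W l \<noteq> 0"
    using assms \<open>W l \<noteq> 0\<close> unfolding L'_def by auto
  then obtain K \<alpha> where bound: "small_values_bound (exp_sum W id L') K \<alpha>"
    using exp_sum_small_values by blast
  have "exp_sum W id L' x = exp_sum W id L x" for x
    unfolding exp_sum_def L'_def by (rule sum.mono_neutral_left) (use assms(1) in auto)
  then have "exp_sum W id L' x = 0" for x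
    using zero by simp
  then have "emeasure lborel {0..1::real} \<le> ennreal (K * \<theta> powr \<alpha>)" if \<theta>: "0 < \<theta>" "\<theta> \<le> 1" for \<theta>
  proof -
    have "{x\<in>{0..0+1}. cmod (exp_sum W id L' x) < \<theta>} = {0..1::real}"
      using \<open>\<And>x. exp_sum W id L' x = 0\<close> \<theta> by auto
    then show ?thesis
      using small_values_boundD(3)[OF bound \<theta>, of 0] by (simp only:)
  qed
  then have "emeasure lborel {0..1::real} = 0"
    by (rule emeasure_eq_0_of_powr_bounds[OF small_values_boundD(2)[OF bound]])
  then show False by simp
qed

section \<open>Propagation along sums of shifts\<close>

primrec shift_sums :: "nat \<Rightarrow> (nat \<Rightarrow> real) \<Rightarrow> nat \<Rightarrow> real set" where
  "shift_sums n d 0 = {0}"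
| "shift_sums n d (Suc i) = (\<Union>j\<in>{2..n}. (\<lambda>s. s + d j) ` shift_sums n d i)"

lemma finite_shift_sums: "finite (shift_sums n d i)"
  by (induction i) auto

lemma card_shift_sums_le: "card (shift_sums n d i) \<le> n ^ i"
proof (induction i)
  case (Suc i)
  have "card (shift_sums n d (Suc i)) \<le> (\<Sum>j\<in>{2..n}. card ((\<lambda>s. s + d j) ` shift_sums n d i))"
    by (simp add: card_UN_le)
  also have "\<dots> \<le> (\<Sum>j\<in>{2..n}. n ^ i)"
    by (intro sum_mono order_trans[OF card_image_le[OF finite_shift_sums]] Suc.IH)
  also have "\<dots> \<le> n * n ^ i"
    by simp
  finally show ?case by simp
qed simp

lemma shift_sums_ge:
  assumes "\<And>j. j \<in> {2..n} \<Longrightarrow> \<delta> \<le> d j" and "s \<in> shift_sums n d i"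
  shows "real i * \<delta> \<le> s"
  using assms(2)
proof (induction i arbitrary: s)
  case (Suc i)
  then obtain j t where "j \<in> {2..n}" "t \<in> shift_sums n d i" "s = t + d j"
    by auto
  with Suc.IH assms(1) show ?case
    by (fastforce simp: algebra_simps)
qed simp

definition super_gaussian_decay :: "(real \<Rightarrow> complex) \<Rightarrow> bool" where
  "super_gaussian_decay f \<longleftrightarrow> (\<forall>c>0. \<forall>\<^sub>F y in at_top. cmod (f y) \<le> exp (- c * y\<^sup>2))"

lemma super_gaussian_decayI:
  assumes "\<And>c. c > 0 \<Longrightarrow> \<forall>\<^sub>F y in at_top. cmod (f y) * exp (c * y\<^sup>2) < 1"
  shows "super_gaussian_decay f"
  unfolding super_gaussian_decay_def
proof (intro allI impI)
  fix c :: real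
  assume "c > 0"
  then show "\<forall>\<^sub>F y in at_top. cmod (f y) \<le> exp (- c * y\<^sup>2)"
    by (rule eventually_mono[OF assms]) (simp add: exp_minus field_simps)
qed

lemma super_gaussian_decay_if_Limsup_le_0:
  assumes "\<And>c. c > 0 \<Longrightarrow> Limsup at_top (\<lambda>x. ereal (cmod (f x) * exp (c * x\<^sup>2))) \<le> 0"
  shows "super_gaussian_decay f"
proof (rule super_gaussian_decayI)
  fix c :: real
  assume "c > 0"
  have "Limsup at_top (\<lambda>x. ereal (cmod (f x) * exp (c * x\<^sup>2))) < 1"
    by (rule order.strict_trans1[OF assms[OF \<open>c > 0\<close>]]) simp
  then show "\<forall>\<^sub>F y in at_top. cmod (f y) * exp (c * y\<^sup>2) < 1"
    by (auto dest: Limsup_lessD)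
qed

lemma super_gaussian_decay_if_tendsto_0:
  assumes "\<And>c. c > 0 \<Longrightarrow> ((\<lambda>x. cmod (f x) * exp (c * x\<^sup>2)) \<longlongrightarrow> 0) at_top"
  shows "super_gaussian_decay f"
  using assms by (intro super_gaussian_decayI order_tendstoD(2)) auto

lemma dominant_shift:
  fixes f :: "real \<Rightarrow> complex" and u :: "nat \<Rightarrow> real \<Rightarrow> complex"
  assumes n: "n \<ge> 1"
    and E: "(\<Sum>j=1..n. u j y * f (y + b j)) = 0"
    and nz: "u 1 y \<noteq> 0" "f (y + b 1) \<noteq> 0"
    and M: "\<And>j. j \<in> {2..n} \<Longrightarrow> cmod (u j y) \<le> M"
  shows "\<exists>j\<in>{2..n}. cmod (f (y + b 1)) * cmod (u 1 y) \<le> M * real n * cmod (f (y + b j))"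
proof (rule ccontr)
  assume "\<not> ?thesis"
  then have lt: "M * real n * cmod (f (y + b j)) < cmod (f (y + b 1)) * cmod (u 1 y)" if "j \<in> {2..n}" for j
    using that by (auto simp: not_le)
  define P where "P = cmod (f (y + b 1)) * cmod (u 1 y)"
  have "P > 0"
    unfolding P_def using nz by simp
  have "{1..n} = insert 1 {2..n}"
    using n by auto
  with E have "u 1 y * f (y + b 1) = - (\<Sum>j=2..n. u j y * f (y + b j))"
    by (simp add: eq_neg_iff_add_eq_0)
  then have "P = cmod (\<Sum>j=2..n. u j y * f (y + b j))"
    unfolding P_def by (metis norm_minus_cancel norm_mult mult.commute)
  also have "\<dots> \<le> (\<Sum>j=2..n. cmod (u j y) * cmod (f (y + b j)))"
    by (rule order_trans[OF norm_sum]) (simp add: norm_mult)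
  also have "\<dots> \<le> (\<Sum>j=2..n. P / n)"
  proof (rule sum_mono)
    fix j assume j: "j \<in> {2..n}"
    have "cmod (u j y) * cmod (f (y + b j)) \<le> M * cmod (f (y + b j))"
      using M[OF j] by (intro mult_right_mono) auto
    also have "\<dots> \<le> P / n"
      using lt[OF j] n unfolding P_def by (simp add: field_simps)
    finally show "cmod (u j y) * cmod (f (y + b j)) \<le> P / n" .
  qed
  also have "\<dots> = (real n - 1) * (P / n)"
    using n by (simp add: of_nat_diff)
  also have "\<dots> < P"
    using \<open>P > 0\<close> n by (simp add: field_simps)
  finally show False by simp
qed

text \<open>Each step moves to a dominant term; the losses \<open>\<theta> exp (-C k) / (M n)\<close> of the steps
  \<open>k < i\<close> multiply to at least \<open>(\<theta> / M n)^i exp (-C i\<^sup>2)\<close>.\<close>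

lemma shift_path_lower_bound:
  fixes f :: "real \<Rightarrow> complex" and u :: "nat \<Rightarrow> real \<Rightarrow> complex"
  assumes n: "n \<ge> 1" and \<theta>: "\<theta> > 0" and C: "C \<ge> 0" and M: "M \<ge> 0"
    and good: "\<And>i s. s \<in> shift_sums n (\<lambda>j. b j - b 1) i \<Longrightarrow>
       (\<Sum>j=1..n. u j (x + s) * f (x + s + b j)) = 0 \<and> \<theta> * exp (- C * i) \<le> cmod (u 1 (x + s))"
    and Mb: "\<And>j y. j \<in> {2..n} \<Longrightarrow> cmod (u j y) \<le> M"
    and fx: "f (x + b 1) \<noteq> 0"
  shows "\<exists>s\<in>shift_sums n (\<lambda>j. b j - b 1) i.
     cmod (f (x + b 1)) * \<theta> ^ i * exp (- C * real i ^ 2) \<le> (M * n) ^ i * cmod (f (x + s + b 1))"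
proof (induction i)
  case 0
  show ?case by simp
next
  case (Suc i)
  then obtain s where s: "s \<in> shift_sums n (\<lambda>j. b j - b 1) i"
    and le: "cmod (f (x + b 1)) * \<theta> ^ i * exp (- C * real i ^ 2) \<le> (M * n) ^ i * cmod (f (x + s + b 1))"
    by blast
  have "f (x + s + b 1) \<noteq> 0"
    using le fx zero_less_power[OF \<theta>, of i] by (auto simp: mult_le_0_iff)
  moreover have E: "(\<Sum>j=1..n. u j (x + s) * f (x + s + b j)) = 0"
    and u1: "\<theta> * exp (- C * i) \<le> cmod (u 1 (x + s))"
    using good[OF s] by auto
  moreover have "u 1 (x + s) \<noteq> 0"
    using u1 \<theta> by (auto simp: mult_le_0_iff)
  ultimately obtain j where j: "j \<in> {2..n}"
    and step: "cmod (f (x + s + b 1)) * cmod (u 1 (x + s)) \<le> M * real n * cmod (f (x + s + b j))"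
    using dominant_shift[of n u "x + s" f b M] n Mb by blast
  define s' where "s' = s + (b j - b 1)"
  have s': "s' \<in> shift_sums n (\<lambda>j. b j - b 1) (Suc i)"
    unfolding s'_def using s j by auto
  have fs': "f (x + s + b j) = f (x + s' + b 1)"
    unfolding s'_def by (simp add: algebra_simps)
  have "- C * real (Suc i) ^ 2 \<le> - C * real i ^ 2 + - C * i"
    using C by (simp add: power2_eq_square algebra_simps) (smt (verit) mult_nonneg_nonneg of_nat_0_le_iff)
  then have "cmod (f (x + b 1)) * \<theta> ^ Suc i * exp (- C * real (Suc i) ^ 2)
      \<le> (cmod (f (x + b 1)) * \<theta> ^ i * exp (- C * real i ^ 2)) * (\<theta> * exp (- C * i))"
    using \<theta> by (simp add: mult_left_mono mult_ac flip: exp_add)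
  also have "\<dots> \<le> ((M * n) ^ i * cmod (f (x + s + b 1))) * cmod (u 1 (x + s))"
    by (rule mult_mono[OF le u1]) (use M \<theta> in auto)
  also have "\<dots> \<le> (M * n) ^ i * (M * real n * cmod (f (x + s' + b 1)))"
    using step fs' M by (simp add: mult_left_mono mult.assoc)
  also have "\<dots> = (M * n) ^ Suc i * cmod (f (x + s' + b 1))"
    by (simp add: algebra_simps)
  finally show ?case
    using s' by blast
qed

lemma gaussian_beats_geometric:
  fixes X :: real
  assumes a0: "a0 > 0" and \<theta>: "\<theta> > 0" and q: "q > 0" and \<delta>: "\<delta> > 0"
    and C: "C \<ge> 0" and c: "c * \<delta>\<^sup>2 = C + 1"
  shows "\<forall>\<^sub>F i in sequentially.
    q ^ i * exp (- c * (X + real i * \<delta>)\<^sup>2) < a0 * \<theta> ^ i * exp (- C * real i ^ 2)"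
proof -
  have "c > 0"
    using c C \<delta> by (metis add_nonneg_pos zero_less_one zero_less_mult_pos2 zero_less_power)
  define L where "L = ln q - ln \<theta> + 2 * c * \<delta> * \<bar>X\<bar>"
  obtain N :: nat where N: "max 1 (L + 1 + \<bar>ln a0\<bar>) < real N"
    using reals_Archimedean2 by blast
  show ?thesis
  proof (rule eventually_sequentiallyI[of N])
    fix i assume "N \<le> i"
    with N have i: "1 \<le> real i" "L + 1 + \<bar>ln a0\<bar> < real i"
      by auto
    have "c * (X + real i * \<delta>)\<^sup>2 = c * X\<^sup>2 + 2 * c * \<delta> * X * real i + (c * \<delta>\<^sup>2) * real i ^ 2"
      by (simp add: power2_eq_square algebra_simps)
    then have "c * (X + real i * \<delta>)\<^sup>2 = c * X\<^sup>2 + 2 * c * \<delta> * X * real i + (C + 1) * real i ^ 2"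
      unfolding c .
    moreover have "(2 * c * \<delta> * real i) * (- \<bar>X\<bar>) \<le> (2 * c * \<delta> * real i) * X"
      using \<open>c > 0\<close> \<delta> by (intro mult_left_mono) auto
    moreover have "0 \<le> c * X\<^sup>2"
      using \<open>c > 0\<close> by simp
    ultimately have quad: "real i * ln q - c * (X + real i * \<delta>)\<^sup>2
        \<le> real i * ln \<theta> - C * real i ^ 2 + real i * (L - real i)"
      unfolding L_def by (simp add: power2_eq_square algebra_simps)
    have "real i * (L - real i) \<le> 1 * (L - real i)"
      using i by (intro mult_right_mono_neg) auto
    also have "\<dots> < ln a0"
      using i by (smt (verit))
    finally have "real i * ln q - c * (X + real i * \<delta>)\<^sup>2 < ln a0 + real i * ln \<theta> - C * real i ^ 2"
      using quad by linarith
    then have "exp (real i * ln q - c * (X + real i * \<delta>)\<^sup>2) < exp (ln a0 + real i * ln \<theta> - C * real i ^ 2)"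
      by simp
    moreover have "exp (real i * ln q - c * (X + real i * \<delta>)\<^sup>2) = q ^ i * exp (- c * (X + real i * \<delta>)\<^sup>2)"
      using q by (simp add: exp_diff exp_of_nat_mult exp_minus field_simps)
    moreover have "exp (ln a0 + real i * ln \<theta> - C * real i ^ 2) = a0 * \<theta> ^ i * exp (- C * real i ^ 2)"
      using a0 \<theta> by (simp add: exp_add exp_diff exp_of_nat_mult exp_minus field_simps)
    ultimately show "q ^ i * exp (- c * (X + real i * \<delta>)\<^sup>2) < a0 * \<theta> ^ i * exp (- C * real i ^ 2)"
      by simp
  qed
qed

lemma small_leading_coeff_along_shifts:
  fixes f :: "real \<Rightarrow> complex" and u :: "nat \<Rightarrow> real \<Rightarrow> complex"
  assumes n: "n \<ge> 1" and \<theta>: "\<theta> > 0" and C: "C \<ge> 0" and M: "M \<ge> 1" and \<delta>: "\<delta> > 0"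
    and gaps: "\<And>j. j \<in> {2..n} \<Longrightarrow> \<delta> \<le> b j - b 1"
    and eqs: "\<And>i s. s \<in> shift_sums n (\<lambda>j. b j - b 1) i \<Longrightarrow> (\<Sum>j=1..n. u j (x + s) * f (x + s + b j)) = 0"
    and Mb: "\<And>j y. j \<in> {2..n} \<Longrightarrow> cmod (u j y) \<le> M"
    and decay: "super_gaussian_decay f" and fx: "f (x + b 1) \<noteq> 0"
  shows "\<exists>i. \<exists>s\<in>shift_sums n (\<lambda>j. b j - b 1) i. cmod (u 1 (x + s)) < \<theta> * exp (- C * i)"
proof (rule ccontr)
  assume "\<not> ?thesis"
  then have good: "\<And>i s. s \<in> shift_sums n (\<lambda>j. b j - b 1) i \<Longrightarrow>
      (\<Sum>j=1..n. u j (x + s) * f (x + s + b j)) = 0 \<and> \<theta> * exp (- C * i) \<le> cmod (u 1 (x + s))"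
    using eqs by (auto simp: not_less)
  define c where "c = (C + 1) / \<delta>\<^sup>2"
  have c: "c > 0" "c * \<delta>\<^sup>2 = C + 1"
    unfolding c_def using C \<delta> by auto
  define X where "X = x + b 1"
  obtain T where T: "\<And>y. y \<ge> T \<Longrightarrow> cmod (f y) \<le> exp (- c * y\<^sup>2)"
    using decay c(1) unfolding super_gaussian_decay_def eventually_at_top_linorder by blast
  obtain N :: nat where N: "\<bar>T\<bar> + \<bar>X\<bar> < real N * \<delta>"
    using reals_Archimedean2[of "(\<bar>T\<bar> + \<bar>X\<bar>) / \<delta>"] \<delta> by (auto simp: field_simps)
  have "\<forall>\<^sub>F i in sequentially. \<bar>T\<bar> + \<bar>X\<bar> \<le> real i * \<delta>"
    using N \<delta> by (intro eventually_sequentiallyI[of N]) (smt (verit) mult_right_mono of_nat_mono)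
  moreover have "\<forall>\<^sub>F i in sequentially.
      (M * n) ^ i * exp (- c * (X + real i * \<delta>)\<^sup>2) < cmod (f X) * \<theta> ^ i * exp (- C * real i ^ 2)"
    using fx M n \<theta> \<delta> C c(2) unfolding X_def by (intro gaussian_beats_geometric) auto
  ultimately obtain i where i: "\<bar>T\<bar> + \<bar>X\<bar> \<le> real i * \<delta>"
    and beat: "(M * n) ^ i * exp (- c * (X + real i * \<delta>)\<^sup>2) < cmod (f X) * \<theta> ^ i * exp (- C * real i ^ 2)"
    using eventually_happens'[OF sequentially_bot] eventually_conj by blast
  obtain s where s: "s \<in> shift_sums n (\<lambda>j. b j - b 1) i"
    and path: "cmod (f X) * \<theta> ^ i * exp (- C * real i ^ 2) \<le> (M * n) ^ i * cmod (f (x + s + b 1))"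
    using shift_path_lower_bound[of n \<theta> C M b u x f i] n \<theta> C M good Mb fx unfolding X_def by auto
  have "real i * \<delta> \<le> s"
    using shift_sums_ge[OF _ s] gaps by blast
  then have y: "X + real i * \<delta> \<le> x + s + b 1" "0 \<le> X + real i * \<delta>" "T \<le> X + real i * \<delta>"
    using i unfolding X_def by auto
  have "cmod (f (x + s + b 1)) \<le> exp (- c * (x + s + b 1)\<^sup>2)"
    using T y by auto
  also have "\<dots> \<le> exp (- c * (X + real i * \<delta>)\<^sup>2)"
    using y c(1) by (simp add: power_mono)
  finally have "(M * n) ^ i * cmod (f (x + s + b 1)) \<le> (M * n) ^ i * exp (- c * (X + real i * \<delta>)\<^sup>2)"
    using M by (intro mult_left_mono) auto
  with path beat show False
    by linarith
qed

text \<open>There are at most \<open>n^i\<close> shifts after \<open>i\<close> steps, while the threshold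
  \<open>\<theta> exp (-C i)\<close> with \<open>C = ln (2n) / \<alpha>\<close> shrinks the small-value bound by \<open>(2n)^-i\<close>.\<close>

lemma emeasure_small_along_shifts:
  assumes bound: "small_values_bound g K \<alpha>" and gm [measurable]: "g \<in> borel_measurable borel"
    and n: "n \<ge> 1" and \<theta>: "0 < \<theta>" "\<theta> \<le> 1"
  shows "emeasure lborel (\<Union>i. \<Union>s\<in>shift_sums n d i.
      {x\<in>{a..a+1}. cmod (g (x + s)) < \<theta> * exp (- (ln (2 * n) / \<alpha>) * i)})
    \<le> ennreal (2 * (K * \<theta> powr \<alpha>))"
proof -
  note K = small_values_boundD[OF bound]
  define C where "C = ln (2 * real n) / \<alpha>"
  have "C \<ge> 0"
    unfolding C_def using n K by simp
  have eC: "exp (- C * \<alpha>) = 1 / (2 * real n)"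
    unfolding C_def using K n by (simp add: exp_minus inverse_eq_divide)
  define A where "A i s = {x\<in>{a..a+1}. cmod (g (x + s)) < \<theta> * exp (- C * real i)}" for i :: nat and s
  have Am: "A i s \<in> sets lborel" for i s
    unfolding A_def by measurable
  have Um: "(\<Union>s\<in>shift_sums n d i. A i s) \<in> sets lborel" for i
    using Am finite_shift_sums by (intro sets.finite_UN) auto
  have "emeasure lborel (\<Union>i. \<Union>s\<in>shift_sums n d i. A i s) \<le> (\<Sum>i. emeasure lborel (\<Union>s\<in>shift_sums n d i. A i s))"
    by (rule emeasure_subadditive_countably) (use Um in auto)
  also have "\<dots> \<le> (\<Sum>i. ennreal (K * \<theta> powr \<alpha> * (1/2) ^ i))"
  proof (rule suminf_le[OF _ summableI summableI])
    fix i
    define \<epsilon> where "\<epsilon> = \<theta> * exp (- C * real i)"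
    have e: "0 < \<epsilon>" "\<epsilon> \<le> 1"
      unfolding \<epsilon>_def using \<theta> \<open>C \<ge> 0\<close> by (auto intro: mult_le_one)
    have "\<epsilon> powr \<alpha> = \<theta> powr \<alpha> * exp (- C * \<alpha>) ^ i"
      unfolding \<epsilon>_def using \<theta> by (simp add: powr_mult exp_powr_real flip: exp_of_nat_mult)
    then have \<epsilon>_powr: "\<epsilon> powr \<alpha> = \<theta> powr \<alpha> * (1 / (2 * real n)) ^ i"
      unfolding eC .
    have "emeasure lborel (\<Union>s\<in>shift_sums n d i. A i s)
        \<le> ennreal (real (card (shift_sums n d i)) * (K * \<epsilon> powr \<alpha>))"
      using small_values_boundD(3)[OF small_values_bound_translate[OF bound gm] e]
      by (intro emeasure_UN_le_card_mult finite_shift_sums Am) (simp add: A_def \<epsilon>_def)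
    also have "\<dots> \<le> ennreal (K * \<theta> powr \<alpha> * (1/2) ^ i)"
    proof (rule ennreal_leI)
      have "real (card (shift_sums n d i)) * (K * \<epsilon> powr \<alpha>) \<le> real n ^ i * (K * \<epsilon> powr \<alpha>)"
        using K card_shift_sums_le[of n d i] by (intro mult_right_mono) (auto simp flip: of_nat_power)
      also have "\<dots> = K * \<theta> powr \<alpha> * (real n * (1 / (2 * real n))) ^ i"
        unfolding \<epsilon>_powr power_mult_distrib by (simp only: ac_simps)
      also have "real n * (1 / (2 * real n)) = 1/2"
        using n by simp
      finally show "real (card (shift_sums n d i)) * (K * \<epsilon> powr \<alpha>) \<le> K * \<theta> powr \<alpha> * (1/2) ^ i" .
    qed
    finally show "emeasure lborel (\<Union>s\<in>shift_sums n d i. A i s) \<le> ennreal (K * \<theta> powr \<alpha> * (1/2) ^ i)" .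
  qed
  also have "\<dots> = ennreal (2 * (K * \<theta> powr \<alpha>))"
    by (rule suminf_ennreal_mult_half_power) (use K in simp)
  finally show ?thesis
    unfolding A_def C_def .
qed

lemma shift_equation_not_super_gaussian_decay:
  fixes f :: "real \<Rightarrow> complex" and u :: "nat \<Rightarrow> real \<Rightarrow> complex" and b :: "nat \<Rightarrow> real"
  assumes f_meas [measurable]: "f \<in> borel_measurable lborel"
    and f_nz: "\<not> (AE x in lborel. f x = 0)"
    and n: "n \<ge> 1" and inj: "inj_on b {1..n}" and b1_min: "\<forall>j\<in>{1..n}. b 1 \<le> b j"
    and u1: "trig_poly (u 1)" "u 1 \<noteq> (\<lambda>x. 0)"
    and u_bounded: "\<forall>j\<in>{2..n}. \<exists>M. \<forall>x. cmod (u j x) \<le> M"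
    and eqn: "AE x in lborel. (\<Sum>j=1..n. u j x * f (x + b j)) = 0"
  shows "\<not> super_gaussian_decay f"
proof
  assume decay: "super_gaussian_decay f"
  obtain W L where "finite L" "L \<noteq> {}" "\<forall>l\<in>L. W l \<noteq> 0" and u1_eq: "u 1 = exp_sum W id L"
    using trig_poly_imp_exp_sum[OF u1] .
  then obtain K \<alpha> where bound: "small_values_bound (u 1) K \<alpha>"
    using exp_sum_small_values by metis
  have u1_meas: "u 1 \<in> borel_measurable borel"
    unfolding u1_eq by simp
  have "b j - b 1 > 0" if j: "j \<in> {2..n}" for j
  proof -
    have "b j \<noteq> b 1"
      using inj_onD[OF inj, of j 1] j n by auto
    moreover have "b 1 \<le> b j"
      using b1_min j by auto
    ultimately show ?thesis by simp
  qed
  then obtain \<delta> where \<delta>: "\<delta> > 0" "\<And>j. j \<in> {2..n} \<Longrightarrow> \<delta> \<le> b j - b 1"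
    using uniform_gap_finite[of "{2..n}" "\<lambda>j. b j - b 1"] by auto
  obtain M where M: "M \<ge> 1" "\<And>j y. j \<in> {2..n} \<Longrightarrow> cmod (u j y) \<le> M"
    using uniform_bound_finite[OF _ u_bounded] by auto
  define C where "C = ln (2 * real n) / \<alpha>"
  have "C \<ge> 0"
    unfolding C_def using n small_values_boundD(2)[OF bound] by simp
  have "AE x in lborel. \<forall>i. \<forall>s\<in>shift_sums n (\<lambda>j. b j - b 1) i.
      (\<Sum>j=1..n. u j (x + s) * f (x + s + b j)) = 0"
    using AE_lborel_translate[OF eqn]
    by (subst AE_all_countable, intro allI, subst AE_ball_countable)
       (auto simp: add.assoc intro: countable_finite finite_shift_sums)
  then have shifts: "AE x in lborel. f (x + b 1) \<noteq> 0 \<longrightarrow> (\<exists>i. \<exists>s\<in>shift_sums n (\<lambda>j. b j - b 1) i.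
      cmod (u 1 (x + s)) < \<theta> * exp (- C * i))" if "\<theta> > 0" for \<theta>
    by eventually_elim
       (use small_leading_coeff_along_shifts[where b = b and u = u and f = f,
          OF n that \<open>C \<ge> 0\<close> M(1) \<delta> _ M(2) decay] in blast)
  have "{x\<in>{of_int k..of_int k + 1}. \<not> f (x + b 1) = 0} \<in> null_sets lborel" for k :: int
  proof -
    let ?Z = "{x\<in>{of_int k..of_int k + 1}. f (x + b 1) \<noteq> 0}"
    have "emeasure lborel ?Z \<le> ennreal (2 * K * \<theta> powr \<alpha>)" if "0 < \<theta>" "\<theta> \<le> 1" for \<theta>
    proof -
      have "emeasure lborel ?Z \<le> emeasure lborel (\<Union>i. \<Union>s\<in>shift_sums n (\<lambda>j. b j - b 1) i.
          {x\<in>{of_int k..of_int k + 1}. cmod (u 1 (x + s)) < \<theta> * exp (- C * i)})"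
      proof (rule emeasure_mono_AE)
        have "{x\<in>{of_int k..of_int k + 1}. cmod (u 1 (x + s)) < t} \<in> sets lborel" for s t
          unfolding u1_eq by measurable
        then show "(\<Union>i. \<Union>s\<in>shift_sums n (\<lambda>j. b j - b 1) i.
            {x\<in>{of_int k..of_int k + 1}. cmod (u 1 (x + s)) < \<theta> * exp (- C * i)}) \<in> sets lborel"
          by (intro sets.countable_nat_UN) (auto intro: sets.finite_UN finite_shift_sums)
      qed (use shifts[OF that(1)] in \<open>auto elim: eventually_mono\<close>)
      also have "\<dots> \<le> ennreal (2 * (K * \<theta> powr \<alpha>))"
        unfolding C_def by (rule emeasure_small_along_shifts[OF bound u1_meas n that])
      finally show ?thesis by (simp add: mult.assoc)
    qed
    then have "emeasure lborel ?Z = 0"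
      by (rule emeasure_eq_0_of_powr_bounds[OF small_values_boundD(2)[OF bound]])
    then show ?thesis
      by (simp add: null_sets_def)
  qed
  then have "AE x in lborel. f (x + b 1) = 0"
    by (rule AE_lborel_if_unit_intervals)
  from AE_lborel_translate[OF this, of "- b 1"] f_nz show False
    by simp
qed

section \<open>Linear independence\<close>

definition modulation_poly :: "(real \<times> real) set \<Rightarrow> (real \<times> real \<Rightarrow> complex) \<Rightarrow> real \<Rightarrow> real \<Rightarrow> complex" where
  "modulation_poly S c t x = (\<Sum>p\<in>{p\<in>S. snd p = t}. c p * exp (2 * of_real pi * \<i> * of_real (fst p * x)))"

lemma gabor_sum_eq_modulation_sum:
  assumes "finite S"
  shows "(\<Sum>p\<in>S. c p * MT (fst p) (snd p) f x) = (\<Sum>t\<in>snd ` S. modulation_poly S c t x * f (x - t))"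
proof -
  have "(\<Sum>p\<in>S. c p * MT (fst p) (snd p) f x)
      = (\<Sum>t\<in>snd ` S. \<Sum>p\<in>{p\<in>S. snd p = t}. c p * MT (fst p) (snd p) f x)"
    by (rule sum.image_gen[OF assms])
  also have "\<dots> = (\<Sum>t\<in>snd ` S. modulation_poly S c t x * f (x - t))"
    unfolding modulation_poly_def MT_def sum_distrib_right by (intro sum.cong refl) (auto simp: mult_ac)
  finally show ?thesis .
qed

lemma trig_poly_modulation_poly:
  assumes "finite S"
  shows "trig_poly (modulation_poly S c t)"
proof -
  define A where "A = {p\<in>S. snd p = t}"
  obtain h where h: "bij_betw h {..<card A} A"
    using ex_bij_betw_nat_finite[of A] assms unfolding A_def by (auto simp: lessThan_atLeast0)
  have eq: "modulation_poly S c t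
      = (\<lambda>x. \<Sum>j<card A. (c \<circ> h) j * exp (2 * of_real pi * \<i> * of_real ((fst \<circ> h) j * x)))"
    unfolding modulation_poly_def A_def[symmetric]
    by (rule ext, subst sum.reindex_bij_betw[OF h, symmetric]) simp
  show ?thesis
    unfolding trig_poly_def
    by (rule exI[of _ "card A"], rule exI[of _ "fst \<circ> h"], rule exI[of _ "c \<circ> h"], rule eq)
qed

lemma norm_modulation_poly_le:
  "cmod (modulation_poly S c t x) \<le> (\<Sum>p\<in>{p\<in>S. snd p = t}. cmod (c p))"
proof -
  have unit: "cmod (exp (2 * of_real pi * \<i> * of_real (fst p * x))) = 1" for p :: "real \<times> real"
  proof -
    have "2 * of_real pi * \<i> * of_real (fst p * x) = \<i> * of_real (2 * pi * fst p * x)"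
      by (simp add: mult_ac)
    then show ?thesis by simp
  qed
  show ?thesis
    unfolding modulation_poly_def by (rule order_trans[OF norm_sum], rule sum_mono) (simp add: norm_mult unit)
qed

lemma modulation_poly_nonzero:
  assumes "finite S" and "p0 \<in> S" and "c p0 \<noteq> 0"
  shows "modulation_poly S c (snd p0) \<noteq> (\<lambda>x. 0)"
proof
  assume zero: "modulation_poly S c (snd p0) = (\<lambda>x. 0)"
  define A where "A = {p\<in>S. snd p = snd p0}"
  define g where "g p = 2 * pi * fst p" for p :: "real \<times> real"
  have A: "finite A" "p0 \<in> A"
    unfolding A_def using assms by auto
  have inj: "inj_on g A"
    unfolding A_def g_def inj_on_def by (auto simp: prod_eq_iff)
  define W where "W l = c (the_inv_into A g l)" for l
  have W: "W (g p) = c p" if "p \<in> A" for p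
    unfolding W_def using the_inv_into_f_f[OF inj that] by simp
  have "exp_sum W id (g ` A) x = (\<Sum>p\<in>A. W (g p) * exp (\<i> * of_real (g p * x)))" for x
    unfolding exp_sum_def by (simp add: sum.reindex[OF inj])
  also have "\<dots> x = modulation_poly S c (snd p0) x" for x
    unfolding modulation_poly_def A_def[symmetric]
  proof (rule sum.cong[OF refl])
    fix p assume "p \<in> A"
    show "W (g p) * exp (\<i> * of_real (g p * x)) = c p * exp (2 * of_real pi * \<i> * of_real (fst p * x))"
      using W[OF \<open>p \<in> A\<close>] by (simp add: g_def mult_ac)
  qed
  finally have "exp_sum W id (g ` A) x = 0" for x
    using zero by simp
  then have "W (g p0) = 0"
    by (rule exp_sum_eq_0_imp_coeff_eq_0[OF finite_imageI[OF A(1)] _ imageI[OF A(2)]])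
  with W[OF A(2)] assms(3) show False
    by simp
qed

lemma gabor_lin_indep_if_super_gaussian_decay:
  fixes f :: "real \<Rightarrow> complex"
  assumes f_meas: "f \<in> borel_measurable lborel" and f_nz: "\<not> (AE x in lborel. f x = 0)"
    and decay: "super_gaussian_decay f"
  shows "gabor_lin_indep f"
  unfolding gabor_lin_indep_def
proof (intro allI impI notI)
  fix S :: "(real \<times> real) set" and c :: "real \<times> real \<Rightarrow> complex"
  assume S: "finite S" and "\<exists>p\<in>S. c p \<noteq> 0"
    and AE0: "AE x in lborel. (\<Sum>p\<in>S. c p * MT (fst p) (snd p) f x) = 0"
  then obtain p0 where p0: "p0 \<in> S" "c p0 \<noteq> 0"
    by blast
  define T where "T = {t\<in>snd ` S. modulation_poly S c t \<noteq> (\<lambda>x. 0)}"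
  have T: "finite T" "snd p0 \<in> T"
    unfolding T_def using S p0 modulation_poly_nonzero by auto
  have sum_T: "(\<Sum>p\<in>S. c p * MT (fst p) (snd p) f x) = (\<Sum>t\<in>T. modulation_poly S c t x * f (x - t))" for x
    unfolding gabor_sum_eq_modulation_sum[OF S] T_def
    by (rule sum.mono_neutral_right) (use S in auto)
  define n where "n = card (uminus ` T)"
  obtain b where b: "bij_betw b {1..n} (uminus ` T)" "\<And>j. j \<in> {1..n} \<Longrightarrow> b 1 \<le> b j"
    using obtain_enumeration_least_first[of "uminus ` T"] T(1) unfolding n_def by blast
  have "n > 0"
    unfolding n_def using T by (auto simp: card_gt_0_iff)
  then have "n \<ge> 1"
    by simp
  define u where "u j = modulation_poly S c (- b j)" for j
  have "- b 1 \<in> T"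
    using bij_betwE[OF b(1)] \<open>n \<ge> 1\<close> by force
  have sum_b: "(\<Sum>j=1..n. u j x * f (x + b j)) = (\<Sum>t\<in>T. modulation_poly S c t x * f (x - t))" for x
  proof -
    have "(\<Sum>j=1..n. u j x * f (x + b j)) = (\<Sum>t\<in>uminus ` T. modulation_poly S c (- t) x * f (x + t))"
      unfolding u_def by (rule sum.reindex_bij_betw[OF b(1)])
    also have "\<dots> = (\<Sum>t\<in>T. modulation_poly S c t x * f (x - t))"
      by (subst sum.reindex) (auto simp: inj_on_def)
    finally show ?thesis .
  qed
  have "\<not> super_gaussian_decay f"
  proof (rule shift_equation_not_super_gaussian_decay[OF f_meas f_nz \<open>n \<ge> 1\<close>])
    show "inj_on b {1..n}"
      using b(1) by (rule bij_betw_imp_inj_on)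
    show "\<forall>j\<in>{1..n}. b 1 \<le> b j"
      using b(2) by blast
    show "trig_poly (u 1)"
      unfolding u_def using S by (rule trig_poly_modulation_poly)
    show "u 1 \<noteq> (\<lambda>x. 0)"
      unfolding u_def using \<open>- b 1 \<in> T\<close> T_def by simp
    show "\<forall>j\<in>{2..n}. \<exists>M. \<forall>x. cmod (u j x) \<le> M"
      unfolding u_def using norm_modulation_poly_le by blast
    show "AE x in lborel. (\<Sum>j=1..n. u j x * f (x + b j)) = 0"
      using AE0 unfolding sum_T sum_b .
  qed
  with decay show False
    by blast
qed

theorem theorem2p3:
  fixes f :: "real \<Rightarrow> complex"
  assumes f_meas: "f \<in> borel_measurable lborel"
    and f_nz: "\<not> (AE x in lborel. f x = 0)"
  shows "(\<forall>(n::nat) (b::nat \<Rightarrow> real) (u::nat \<Rightarrow> real \<Rightarrow> complex).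
            n \<ge> 1
          \<and> inj_on b {1..n}
          \<and> (\<forall>j\<in>{1..n}. b 1 \<le> b j)
          \<and> trig_poly (u 1) \<and> u 1 \<noteq> (\<lambda>x. 0)
          \<and> (\<forall>j\<in>{2..n}. u j \<in> borel_measurable lborel \<and> (\<exists>M. \<forall>x. norm (u j x) \<le> M))
          \<and> (AE x in lborel. (\<Sum>j=1..n. u j x * f (x + b j)) = 0)
          \<longrightarrow> (\<exists>c>0. Limsup at_top (\<lambda>x. ereal (norm (f x) * exp (c * x\<^sup>2))) > 0))
       \<and> ((\<forall>c>0. ((\<lambda>x. norm (f x) * exp (c * x\<^sup>2)) \<longlongrightarrow> 0) at_top)
          \<longrightarrow> gabor_lin_indep f)"
proof (intro conjI allI impI)
  fix n :: nat and b :: "nat \<Rightarrow> real" and u :: "nat \<Rightarrow> real \<Rightarrow> complex"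
  assume H: "n \<ge> 1
          \<and> inj_on b {1..n}
          \<and> (\<forall>j\<in>{1..n}. b 1 \<le> b j)
          \<and> trig_poly (u 1) \<and> u 1 \<noteq> (\<lambda>x. 0)
          \<and> (\<forall>j\<in>{2..n}. u j \<in> borel_measurable lborel \<and> (\<exists>M. \<forall>x. norm (u j x) \<le> M))
          \<and> (AE x in lborel. (\<Sum>j=1..n. u j x * f (x + b j)) = 0)"
  have "\<not> super_gaussian_decay f"
    by (rule shift_equation_not_super_gaussian_decay[of f n b u]) (use f_meas f_nz H in auto)
  then show "\<exists>c>0. Limsup at_top (\<lambda>x. ereal (norm (f x) * exp (c * x\<^sup>2))) > 0"
    using super_gaussian_decay_if_Limsup_le_0 by (meson not_le)
next
  assume "\<forall>c>0. ((\<lambda>x. norm (f x) * exp (c * x\<^sup>2)) \<longlongrightarrow> 0) at_top"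
  then show "gabor_lin_indep f"
    by (intro gabor_lin_indep_if_super_gaussian_decay[OF f_meas f_nz] super_gaussian_decay_if_tendsto_0) auto
qed

end
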